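(* Every equivalence corelation in $\mathbf{MetCH_{sep}}$ is effective.
   Context: A metric on a set $X$ is a map $d\colon X\times X\to[0,\infty]$ with $d(x,x)=0$ and $d(x,z)\le d(x,y)+d(y,z)$ (not necessarily symmetric, $\infty$ allowed); separated means $d(x,y)=0=d(y,x)$ implies $x=y$. A separated metric compact Hausdorff space is a compact Hausdorff space with a separated metric continuous $X\times X\to[0,\infty]$ for the upper topology on $[0,\infty]$ (open sets $]u,\infty]$); $\mathbf{MetCH_{sep}}$ is the category of these with continuous non-expansive maps. $X+X$ denotes the coproduct (disjoint union, coproduct topology, metric equal to $d$ within each copy and $\infty$ between copies). A binary corelation on $X$ is a surjective morphism $\binom{q_0}{q_1}\colon X+X\to S$ (given by $q_0,q_1\colon X\to S$), taken up to isomorphism under $X+X$. It is reflexive if there is a morphism $e\colon S\to X$ with $e\circ q_0=e\circ q_1=1_X$; symmetric if there is $s\colon S\to S$ with $s\circ q_0=q_1$ and $s\circ q_1=q_0$; transitive if, letting $\lambda_0,\lambda_1\colon S\to P$ be the pushout of $q_1$ and $q_0$ (so $\lambda_0\circ q_1=\lambda_1\circ q_0$), there is $t\colon S\to P$ with $t\circ q_0=\lambda_0\circ q_0$ and $t\circ q_1=\lambda_1\circ q_1$. An equivalence corelation is one that is reflexive, symmetric and transitive. It is effective if, with $i\colon A\to X$ the equaliser of $q_0,q_1$ in $\mathbf{MetCH_{sep}}$, the square $q_0\circ i=q_1\circ i$ is a pushout in $\mathbf{MetCH_{sep}}$ (i.e. $(q_0,q_1)$ is the cokernel pair of its equaliser).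 *)

theory Defs
  imports "HOL-Analysis.Analysis" "HOL-Library.Extended_Nonnegative_Real"
begin

type_synonym 'a metobj = "'a topology \<times> ('a \<Rightarrow> 'a \<Rightarrow> ennreal)"

definition carrier_of :: "'a metobj \<Rightarrow> 'a set" where
  "carrier_of X = topspace (fst X)"

text \<open>Continuity of d for the upper
topology on [0,\<infinity>] (open sets ]u,\<infinity>], plus the whole space) means: every
preimage of ]u,\<infinity>] is open in the product topology.\<close>

definition metch :: "'a metobj \<Rightarrow> bool" where
  "metch X \<longleftrightarrow>
     (let T = fst X; d = snd X; U = topspace T in
       compact_space T \<and> Hausdorff_space T \<and>
       (\<forall>x\<in>U. d x x = 0) \<and>
       (\<forall>x\<in>U. \<forall>y\<in>U. \<forall>z\<in>U. d x z \<le> d x y + d y z) \<and>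
       (\<forall>x\<in>U. \<forall>y\<in>U. d x y = 0 \<and> d y x = 0 \<longrightarrow> x = y) \<and>
       (\<forall>u::ennreal. openin (prod_topology T T) {p \<in> U \<times> U. u < d (fst p) (snd p)}))"

definition mor :: "'a metobj \<Rightarrow> 'b metobj \<Rightarrow> ('a \<Rightarrow> 'b) \<Rightarrow> bool" where
  "mor X Y f \<longleftrightarrow> continuous_map (fst X) (fst Y) f \<and>
     (\<forall>x\<in>carrier_of X. \<forall>y\<in>carrier_of X. snd Y (f x) (f y) \<le> snd X x y)"

text \<open>(P, l0, l1) is a pushout of f : X -> Y and g : X -> Z in MetCH_sep,
where the universal property is required against all test objects whose
carrier lives in the type 'q.\<close>

definition pushout_wrt ::
  "'q itself \<Rightarrow> 'x metobj \<Rightarrow> 'y metobj \<Rightarrow> 'z metobj \<Rightarrow> ('x \<Rightarrow> 'y) \<Rightarrow> ('x \<Rightarrow> 'z)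
     \<Rightarrow> 'p metobj \<Rightarrow> ('y \<Rightarrow> 'p) \<Rightarrow> ('z \<Rightarrow> 'p) \<Rightarrow> bool" where
  "pushout_wrt _ X Y Z f g P l0 l1 \<longleftrightarrow>
     metch X \<and> metch Y \<and> metch Z \<and> metch P \<and>
     mor X Y f \<and> mor X Z g \<and> mor Y P l0 \<and> mor Z P l1 \<and>
     (\<forall>x\<in>carrier_of X. l0 (f x) = l1 (g x)) \<and>
     (\<forall>(Q :: 'q metobj) h0 h1.
        metch Q \<and> mor Y Q h0 \<and> mor Z Q h1 \<and> (\<forall>x\<in>carrier_of X. h0 (f x) = h1 (g x))
        \<longrightarrow> (\<exists>k. mor P Q k \<and> (\<forall>y\<in>carrier_of Y. k (l0 y) = h0 y) \<and>
                 (\<forall>z\<in>carrier_of Z. k (l1 z) = h1 z) \<and>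
                 (\<forall>k'. mor P Q k' \<and> (\<forall>y\<in>carrier_of Y. k' (l0 y) = h0 y) \<and>
                       (\<forall>z\<in>carrier_of Z. k' (l1 z) = h1 z)
                       \<longrightarrow> (\<forall>p\<in>carrier_of P. k' p = k p))))"

text \<open>A binary corelation on X: a surjective morphism X+X -> S, given by the pair
of its components q0, q1 : X -> S (a morphism out of the coproduct is exactly such
a pair; surjectivity means the images of q0 and q1 cover S).\<close>

definition binary_corel :: "'x metobj \<Rightarrow> 's metobj \<Rightarrow> ('x \<Rightarrow> 's) \<Rightarrow> ('x \<Rightarrow> 's) \<Rightarrow> bool" where
  "binary_corel X S q0 q1 \<longleftrightarrow> metch X \<and> metch S \<and> mor X S q0 \<and> mor X S q1 \<and>
     carrier_of S = q0 ` carrier_of X \<union> q1 ` carrier_of X"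

definition reflexive_corel :: "'x metobj \<Rightarrow> 's metobj \<Rightarrow> ('x \<Rightarrow> 's) \<Rightarrow> ('x \<Rightarrow> 's) \<Rightarrow> bool" where
  "reflexive_corel X S q0 q1 \<longleftrightarrow>
     (\<exists>e. mor S X e \<and> (\<forall>x\<in>carrier_of X. e (q0 x) = x \<and> e (q1 x) = x))"

definition symmetric_corel :: "'x metobj \<Rightarrow> 's metobj \<Rightarrow> ('x \<Rightarrow> 's) \<Rightarrow> ('x \<Rightarrow> 's) \<Rightarrow> bool" where
  "symmetric_corel X S q0 q1 \<longleftrightarrow>
     (\<exists>s. mor S S s \<and> (\<forall>x\<in>carrier_of X. s (q0 x) = q1 x \<and> s (q1 x) = q0 x))"

text \<open>Pushouts are unique up to isomorphism and the pushout of two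
maps out of S has carrier the image of S+S, so it can be represented in the type
's + 's; an object of that type that is a pushout against all test objects of that
same type is a genuine pushout.\<close>

definition transitive_corel :: "'x metobj \<Rightarrow> 's metobj \<Rightarrow> ('x \<Rightarrow> 's) \<Rightarrow> ('x \<Rightarrow> 's) \<Rightarrow> bool" where
  "transitive_corel X S q0 q1 \<longleftrightarrow>
     (\<forall>(P :: ('s + 's) metobj) l0 l1.
        pushout_wrt TYPE('s + 's) X S S q1 q0 P l0 l1 \<longrightarrow>
        (\<exists>t. mor S P t \<and> (\<forall>x\<in>carrier_of X. t (q0 x) = l0 (q0 x) \<and> t (q1 x) = l1 (q1 x))))"

definition equivalence_corel :: "'x metobj \<Rightarrow> 's metobj \<Rightarrow> ('x \<Rightarrow> 's) \<Rightarrow> ('x \<Rightarrow> 's) \<Rightarrow> bool" where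
  "equivalence_corel X S q0 q1 \<longleftrightarrow> binary_corel X S q0 q1 \<and>
     reflexive_corel X S q0 q1 \<and> symmetric_corel X S q0 q1 \<and> transitive_corel X S q0 q1"

definition equaliser_obj :: "'x metobj \<Rightarrow> ('x \<Rightarrow> 's) \<Rightarrow> ('x \<Rightarrow> 's) \<Rightarrow> 'x metobj" where
  "equaliser_obj X q0 q1 =
     (subtopology (fst X) {x \<in> carrier_of X. q0 x = q1 x}, snd X)"

definition effective_wrt ::
  "'q itself \<Rightarrow> 'x metobj \<Rightarrow> 's metobj \<Rightarrow> ('x \<Rightarrow> 's) \<Rightarrow> ('x \<Rightarrow> 's) \<Rightarrow> bool" where
  "effective_wrt tq X S q0 q1 \<longleftrightarrow>
     pushout_wrt tq (equaliser_obj X q0 q1) X X id id S q0 q1"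

end

(*
  Write c x y = dS (q0 x) (q1 y). Reflexivity makes q0 and q1 isometric embeddings with
  dX x y \<le> c x y, and symmetry gives dS (q1 x) (q0 y) = c x y. Transitivity, tested on an
  explicit model of the pushout of q1 and q0 (two copies of S glued along q1 x ~ q0 x, with
  cross distances given by one-step "bridges"), yields weak transitivity: for all x, y
  some z satisfies c x z + c z y \<le> c x y. A maximality argument in the compact space X \<times> X
  (a preorder version of Ward's theorem) then turns weak transitivity into a point a of the
  equaliser with dX x a + dX a y \<le> c x y. Hence two maps out of X that agree on the
  equaliser glue to a non-expansive map out of S, i.e. S is the cokernel pair of the
  equaliser.
*)

theory Submission
  imports Defs
begin

section \<open>Lower semicontinuous functions\<close>

lemma compact_space_Inter_nonempty:
  assumes "compact_space T" "\<And>K. K \<in> \<K> \<Longrightarrow> closedin T K"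
    and "\<And>\<F>. finite \<F> \<Longrightarrow> \<F> \<subseteq> \<K> \<Longrightarrow> \<Inter>\<F> \<noteq> {}"
  shows "\<Inter>\<K> \<noteq> {}"
  using assms unfolding compact_space_fip by blast

definition lsc :: "'a topology \<Rightarrow> ('a \<Rightarrow> 'b::linorder) \<Rightarrow> bool" where
  "lsc T f \<longleftrightarrow> (\<forall>u. openin T {x \<in> topspace T. u < f x})"

lemma lsc_iff_closedin_sublevel:
  "lsc T f \<longleftrightarrow> (\<forall>u. closedin T {x \<in> topspace T. f x \<le> u})"
proof -
  have "topspace T - {x \<in> topspace T. f x \<le> u} = {x \<in> topspace T. u < f x}" for u
    by auto
  then show ?thesis
    unfolding lsc_def closedin_def by auto
qed

lemma lsc_closedin_sublevel: "lsc T f \<Longrightarrow> closedin T {x \<in> topspace T. f x \<le> u}"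
  by (simp add: lsc_iff_closedin_sublevel)

lemma lsc_compose:
  assumes "continuous_map T T' g" "lsc T' f"
  shows "lsc T (\<lambda>x. f (g x))"
  unfolding lsc_def
proof
  fix u
  have "{x \<in> topspace T. u < f (g x)} = {x \<in> topspace T. g x \<in> {y \<in> topspace T'. u < f y}}"
    using continuous_map_image_subset_topspace[OF assms(1)] by auto
  also have "openin T \<dots>"
    using assms unfolding lsc_def by (intro openin_continuous_map_preimage) auto
  finally show "openin T {x \<in> topspace T. u < f (g x)}" .
qed

lemma lsc_attains_min:
  assumes "compact_space T" "lsc T f" "topspace T \<noteq> {}"
  obtains x where "x \<in> topspace T" "\<And>y. y \<in> topspace T \<Longrightarrow> f x \<le> f y"
proof -
  define C where "C y = {x \<in> topspace T. f x \<le> f y}" for y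
  have "\<Inter>(C ` topspace T) \<noteq> {}"
  proof (rule compact_space_Inter_nonempty[OF assms(1)])
    show "closedin T K" if "K \<in> C ` topspace T" for K
      using that lsc_closedin_sublevel[OF assms(2)] by (auto simp: C_def)
    fix \<F> assume "finite \<F>" "\<F> \<subseteq> C ` topspace T"
    then obtain F where F: "finite F" "F \<subseteq> topspace T" "\<F> = C ` F"
      by (meson finite_subset_image)
    show "\<Inter>\<F> \<noteq> {}"
    proof (cases "F = {}")
      case True
      then show ?thesis using F assms(3) by simp
    next
      case False
      have "Min (f ` F) \<in> f ` F"
        using F(1) False by simp
      then obtain y where "y \<in> F" "f y = Min (f ` F)"
        by (metis imageE)
      then have "y \<in> C y'" if "y' \<in> F" for y'
        using that F(1,2) unfolding C_def by auto
      then show ?thesis using F(3) by blast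
    qed
  qed
  then obtain x where "x \<in> \<Inter>(C ` topspace T)" by blast
  then show ?thesis using that assms(3) unfolding C_def by blast
qed

lemma lsc_attains_INF:
  fixes f :: "'a \<Rightarrow> 'b::complete_linorder"
  assumes "compact_space T" "lsc T f" "topspace T \<noteq> {}"
  obtains x where "x \<in> topspace T" "(INF y\<in>topspace T. f y) = f x"
proof -
  obtain x where "x \<in> topspace T" "\<And>y. y \<in> topspace T \<Longrightarrow> f x \<le> f y"
    using lsc_attains_min[OF assms] by blast
  then show ?thesis
    using that by (metis INF_greatest INF_lower antisym)
qed

lemma lsc_const: "lsc T (\<lambda>x. c)"
  unfolding lsc_def by (cases "\<forall>u. u < c") (auto simp: Collect_conj_eq)

lemma lsc_fibre:
  assumes "lsc (prod_topology T1 T2) G" "x \<in> topspace T1"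
  shows "lsc T2 (\<lambda>y. G (x, y))"
proof -
  have "continuous_map T2 (prod_topology T1 T2) (\<lambda>y. (x, y))"
    using assms(2) by (intro continuous_map_pairedI) auto
  then show ?thesis
    using assms(1) by (rule lsc_compose)
qed

lemma lsc_INF_fibre:
  fixes G :: "'a \<times> 'b \<Rightarrow> 'c::complete_linorder"
  assumes "compact_space T2" "lsc (prod_topology T1 T2) G"
  shows "lsc T1 (\<lambda>x. INF y\<in>topspace T2. G (x, y))"
proof (cases "topspace T2 = {}")
  case True
  then show ?thesis by (simp add: lsc_const)
next
  case False
  show ?thesis
    unfolding lsc_iff_closedin_sublevel
  proof
    fix u
    have "{x \<in> topspace T1. (INF y\<in>topspace T2. G (x, y)) \<le> u}
        = fst ` {p \<in> topspace (prod_topology T1 T2). G p \<le> u}"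
    proof (intro equalityI subsetI)
      fix x assume x: "x \<in> {x \<in> topspace T1. (INF y\<in>topspace T2. G (x, y)) \<le> u}"
      then obtain y where "y \<in> topspace T2" "(INF y\<in>topspace T2. G (x, y)) = G (x, y)"
        using lsc_attains_INF[OF assms(1) lsc_fibre[OF assms(2)] False] by blast
      then show "x \<in> fst ` {p \<in> topspace (prod_topology T1 T2). G p \<le> u}"
        using x by (force simp: image_iff)
    qed (auto intro: INF_lower2)
    also have "closedin T1 \<dots>"
      using closed_map_fst[OF assms(1)] lsc_closedin_sublevel[OF assms(2)]
      unfolding closed_map_def by blast
    finally show "closedin T1 {x \<in> topspace T1. (INF y\<in>topspace T2. G (x, y)) \<le> u}" .
  qed
qed

lemma lsc_neighbourhood:
  fixes f :: "'a \<Rightarrow> 'b::{linorder,order_bot}"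
  assumes "lsc T f" "x \<in> topspace T" "a = bot \<or> a < f x"
  obtains V where "openin T V" "x \<in> V" "\<And>y. y \<in> V \<Longrightarrow> a \<le> f y"
proof (cases "a = bot")
  case True
  then show ?thesis using that[of "topspace T"] assms(2) by auto
next
  case False
  show ?thesis
    by (rule that[of "{y \<in> topspace T. a < f y}"]) (use False assms in \<open>auto simp: lsc_def\<close>)
qed

lemma ennreal_less_add_approx_left:
  fixes r x y :: ennreal
  assumes "r < x + y"
  obtains a where "a = 0 \<or> a < x" "r < a + y"
proof (cases "x = 0")
  case True
  then show ?thesis using that[of 0] assms by simp
next
  case False
  then have "0 < x" by (simp add: zero_less_iff_neq_zero)
  have "((\<lambda>a. a + y) \<longlongrightarrow> x + y) (at_left x)"
    by (intro tendsto_intros)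
  then have "\<forall>\<^sub>F a in at_left x. r < a + y"
    using assms by (rule order_tendstoD(1))
  then obtain b where "b < x" "\<And>a. b < a \<Longrightarrow> a < x \<Longrightarrow> r < a + y"
    unfolding eventually_at_left[OF \<open>0 < x\<close>] by blast
  moreover obtain a where "b < a" "a < x"
    using dense[OF \<open>b < x\<close>] by blast
  ultimately show ?thesis using that by blast
qed

lemma ennreal_less_add_approx:
  fixes r x y :: ennreal
  assumes "r < x + y"
  obtains a b where "a = 0 \<or> a < x" "b = 0 \<or> b < y" "r < a + b"
proof -
  obtain a where a: "a = 0 \<or> a < x" "r < a + y"
    using ennreal_less_add_approx_left[OF assms] .
  then obtain b where "b = 0 \<or> b < y" "r < b + a"
    using ennreal_less_add_approx_left[of r y a] by (metis add.commute)
  then show ?thesis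
    using that a(1) by (metis add.commute)
qed

lemma lsc_add:
  fixes f g :: "'a \<Rightarrow> ennreal"
  assumes "lsc T f" "lsc T g"
  shows "lsc T (\<lambda>x. f x + g x)"
  unfolding lsc_def
proof
  fix u
  show "openin T {x \<in> topspace T. u < f x + g x}"
  proof (subst openin_subopen, intro ballI)
    fix x assume "x \<in> {x \<in> topspace T. u < f x + g x}"
    then have x: "x \<in> topspace T" "u < f x + g x"
      by auto
    then obtain a b where ab: "a = bot \<or> a < f x" "b = bot \<or> b < g x" "u < a + b"
      using ennreal_less_add_approx unfolding bot_ennreal by metis
    obtain V where V: "openin T V" "x \<in> V" "\<And>y. y \<in> V \<Longrightarrow> a \<le> f y"
      using lsc_neighbourhood[OF assms(1) x(1) ab(1)] by blast
    obtain W where W: "openin T W" "x \<in> W" "\<And>y. y \<in> W \<Longrightarrow> b \<le> g y"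
      using lsc_neighbourhood[OF assms(2) x(1) ab(2)] by blast
    have "u < f y + g y" if "y \<in> V \<inter> W" for y
      using ab(3) add_mono[OF V(3) W(3)] that by (auto intro: less_le_trans)
    then show "\<exists>U. openin T U \<and> x \<in> U \<and> U \<subseteq> {x \<in> topspace T. u < f x + g x}"
      using V W openin_subset[OF V(1)] by (intro exI[of _ "V \<inter> W"]) auto
  qed
qed

lemma continuous_map_if_closedin:
  assumes "continuous_map T Y f" "continuous_map T Y g" "closedin T A" "closedin T B"
    "topspace T \<subseteq> A \<union> B" "\<And>x. x \<in> A \<Longrightarrow> x \<in> B \<Longrightarrow> f x = g x"
  shows "continuous_map T Y (\<lambda>x. if x \<in> A then f x else g x)"
proof (rule continuous_map_cases)
  show "continuous_map (subtopology T (T closure_of {x. x \<in> A})) Y f"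
    using assms(1) by (rule continuous_map_from_subtopology)
  show "continuous_map (subtopology T (T closure_of {x. x \<notin> A})) Y g"
    using assms(2) by (rule continuous_map_from_subtopology)
  fix x assume x: "x \<in> T frontier_of {x. x \<in> A}"
  have "T closure_of {x. x \<in> A} = A"
    using assms(3) by (simp add: closure_of_closedin)
  moreover have "T closure_of (topspace T - {x. x \<in> A}) \<subseteq> B"
    using assms(4,5) by (intro closure_of_minimal) auto
  ultimately have "x \<in> A" "x \<in> B"
    using x unfolding frontier_of_closures by auto
  then show "f x = g x" by (rule assms(6))
qed

section \<open>Maximal elements of closed preorders on compact spaces\<close>

lemma finite_chain_has_greatest:
  assumes "finite F" "F \<noteq> {}"
    and total: "\<And>x y. \<lbrakk>x \<in> F; y \<in> F\<rbrakk> \<Longrightarrow> R x y \<or> R y x"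
    and trans: "\<And>x y z. \<lbrakk>x \<in> F; y \<in> F; z \<in> F; R x y; R y z\<rbrakk> \<Longrightarrow> R x z"
  shows "\<exists>m\<in>F. \<forall>x\<in>F. R x m"
  using assms
proof (induction F rule: finite_ne_induct)
  case (singleton x)
  then show ?case by blast
next
  case (insert b F)
  have "\<exists>m\<in>F. \<forall>x\<in>F. R x m"
  proof (rule insert.IH)
    show "R x y \<or> R y x" if "x \<in> F" "y \<in> F" for x y
      using that insert.prems(1) by blast
    show "R x z" if "x \<in> F" "y \<in> F" "z \<in> F" "R x y" "R y z" for x y z
      using that insert.prems(2) by blast
  qed
  then obtain m where m: "m \<in> F" "\<forall>x\<in>F. R x m"
    by blast
  consider "R b m" | "R m b"
    using insert.prems(1)[of b m] m(1) by blast
  then show ?case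
  proof cases
    case 1
    then show ?thesis
      using m by blast
  next
    case 2
    have "R b b"
      using insert.prems(1)[of b b] by blast
    moreover have "R x b" if "x \<in> F" for x
      using insert.prems(2)[of x m b] m that 2 by blast
    ultimately show ?thesis
      by blast
  qed
qed

lemma compact_space_chain_upper_bound:
  assumes "compact_space T" "C \<subseteq> topspace T" "C \<noteq> {}"
    and total: "\<And>x y. \<lbrakk>x \<in> C; y \<in> C\<rbrakk> \<Longrightarrow> R x y \<or> R y x"
    and trans: "\<And>x y z. \<lbrakk>x \<in> topspace T; y \<in> topspace T; z \<in> topspace T; R x y; R y z\<rbrakk> \<Longrightarrow> R x z"
    and closed: "\<And>x. x \<in> C \<Longrightarrow> closedin T {y \<in> topspace T. R x y}"
  obtains u where "u \<in> topspace T" "\<And>x. x \<in> C \<Longrightarrow> R x u"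
proof -
  have "\<Inter>((\<lambda>x. {y \<in> topspace T. R x y}) ` C) \<noteq> {}"
  proof (rule compact_space_Inter_nonempty[OF assms(1)])
    show "closedin T K" if "K \<in> (\<lambda>x. {y \<in> topspace T. R x y}) ` C" for K
      using that closed by (auto simp: image_iff)
    fix \<F> assume "finite \<F>" "\<F> \<subseteq> (\<lambda>x. {y \<in> topspace T. R x y}) ` C"
    then obtain F where F: "finite F" "F \<subseteq> C" "\<F> = (\<lambda>x. {y \<in> topspace T. R x y}) ` F"
      by (meson finite_subset_image)
    show "\<Inter>\<F> \<noteq> {}"
    proof (cases "F = {}")
      case False
      have FT: "F \<subseteq> topspace T"
        using F(2) assms(2) by blast
      have "\<exists>m\<in>F. \<forall>x\<in>F. R x m"
      proof (rule finite_chain_has_greatest[OF F(1) False])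
        show "R x y \<or> R y x" if "x \<in> F" "y \<in> F" for x y
          using that F(2) total by blast
        show "R x z" if "x \<in> F" "y \<in> F" "z \<in> F" "R x y" "R y z" for x y z
          using that FT by (auto intro: trans[of x y z])
      qed
      then obtain m where "m \<in> F" "\<forall>x\<in>F. R x m"
        by blast
      then have "m \<in> \<Inter>\<F>"
        unfolding F(3) using FT by auto
      then show ?thesis
        by blast
    qed (simp add: F(3))
  qed
  then obtain u where u: "\<And>x. x \<in> C \<Longrightarrow> u \<in> topspace T \<and> R x u"
    by blast
  obtain x0 where "x0 \<in> C"
    using assms(3) by blast
  show thesis
    by (rule that) (use u \<open>x0 \<in> C\<close> in auto)
qed

lemma compact_space_preorder_maximal:
  assumes "compact_space T" "a \<in> topspace T"
    and refl: "\<And>x. x \<in> topspace T \<Longrightarrow> R x x"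
    and trans: "\<And>x y z. \<lbrakk>x \<in> topspace T; y \<in> topspace T; z \<in> topspace T; R x y; R y z\<rbrakk> \<Longrightarrow> R x z"
    and closed: "\<And>x. x \<in> topspace T \<Longrightarrow> closedin T {y \<in> topspace T. R x y}"
  obtains m where "m \<in> topspace T" "R a m" "\<And>y. \<lbrakk>y \<in> topspace T; R m y\<rbrakk> \<Longrightarrow> R y m"
proof -
  define A where "A = {x \<in> topspace T. R a x}"
  obtain M where M: "pred_on.maxchain A R M"
    using pred_on.Hausdorff by blast
  then have M_chain: "M \<subseteq> A" "\<And>x y. \<lbrakk>x \<in> M; y \<in> M\<rbrakk> \<Longrightarrow> R x y \<or> R y x"
    unfolding pred_on.maxchain_def pred_on.chain_def using refl A_def by auto
  have aM: "insert a M \<subseteq> topspace T"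
    using assms(2) M_chain(1) unfolding A_def by blast
  obtain u where u: "u \<in> topspace T" "\<And>x. x \<in> insert a M \<Longrightarrow> R x u"
  proof (rule compact_space_chain_upper_bound[OF assms(1) aM])
    show "R x y \<or> R y x" if "x \<in> insert a M" "y \<in> insert a M" for x y
      using that M_chain refl assms(2) unfolding A_def by blast
    show "R x z" if "x \<in> topspace T" "y \<in> topspace T" "z \<in> topspace T" "R x y" "R y z" for x y z
      using that by (rule trans)
    show "closedin T {y \<in> topspace T. R x y}" if "x \<in> insert a M" for x
      using that aM closed by blast
  qed auto
  show thesis
  proof (rule that)
    show "u \<in> topspace T" "R a u"
      using u by auto
    fix y assume y: "y \<in> topspace T" "R u y"
    have "\<forall>x\<in>M. R x y"
      using u y trans M_chain(1) unfolding A_def by blast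
    moreover have "y \<in> A"
      using u y trans assms(2) unfolding A_def by blast
    ultimately have "pred_on.chain A R ({y} \<union> M)"
      using pred_on.chain_extend[OF pred_on.maxchain_imp_chain[OF M]] by blast
    then have "y \<in> M"
      using M unfolding pred_on.maxchain_def by blast
    then show "R y u"
      using u by blast
  qed
qed

locale metch_space =
  fixes T :: "'a topology" and d :: "'a \<Rightarrow> 'a \<Rightarrow> ennreal"
  assumes compact: "compact_space T"
    and Hausdorff: "Hausdorff_space T"
    and refl [simp]: "\<And>x. x \<in> topspace T \<Longrightarrow> d x x = 0"
    and triangle: "\<And>x y z. \<lbrakk>x \<in> topspace T; y \<in> topspace T; z \<in> topspace T\<rbrakk> \<Longrightarrow> d x z \<le> d x y + d y z"
    and separated: "\<And>x y. \<lbrakk>x \<in> topspace T; y \<in> topspace T; d x y = 0; d y x = 0\<rbrakk> \<Longrightarrow> x = y"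
    and lsc: "lsc (prod_topology T T) (\<lambda>p. d (fst p) (snd p))"

lemma metch_iff_metch_space: "metch (T, d) \<longleftrightarrow> metch_space T d"
  unfolding metch_def metch_space_def Let_def lsc_def by (auto simp: topspace_prod_topology)

lemma mor_iff:
  "mor (T, d) (T', d') f \<longleftrightarrow>
     continuous_map T T' f \<and> (\<forall>x\<in>topspace T. \<forall>y\<in>topspace T. d' (f x) (f y) \<le> d x y)"
  by (simp add: mor_def carrier_of_def)

lemma mor_continuous_map: "mor (T, d) (T', d') f \<Longrightarrow> continuous_map T T' f"
  by (simp add: mor_iff)

lemma mor_nonexpansive:
  "\<lbrakk>mor (T, d) (T', d') f; x \<in> topspace T; y \<in> topspace T\<rbrakk> \<Longrightarrow> d' (f x) (f y) \<le> d x y"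
  by (simp add: mor_iff)

lemma mor_in_topspace: "\<lbrakk>mor (T, d) (T', d') f; x \<in> topspace T\<rbrakk> \<Longrightarrow> f x \<in> topspace T'"
  using continuous_map_image_subset_topspace[OF mor_continuous_map] by blast

lemma pushout_wrtI:
  assumes "metch X" "metch Y" "metch Z" "metch P"
    and "mor X Y f" "mor X Z g" "mor Y P l0" "mor Z P l1"
    and commute: "\<And>x. x \<in> carrier_of X \<Longrightarrow> l0 (f x) = l1 (g x)"
    and jointly_surjective: "carrier_of P \<subseteq> l0 ` carrier_of Y \<union> l1 ` carrier_of Z"
    and factor: "\<And>(TQ :: 'q topology) dQ h0 h1. \<lbrakk>metch_space TQ dQ; mor Y (TQ, dQ) h0; mor Z (TQ, dQ) h1;
        \<And>x. x \<in> carrier_of X \<Longrightarrow> h0 (f x) = h1 (g x)\<rbrakk> \<Longrightarrow>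
        \<exists>k. mor P (TQ, dQ) k \<and> (\<forall>y\<in>carrier_of Y. k (l0 y) = h0 y) \<and> (\<forall>z\<in>carrier_of Z. k (l1 z) = h1 z)"
  shows "pushout_wrt TYPE('q) X Y Z f g P l0 l1"
  unfolding pushout_wrt_def
proof (intro conjI ballI allI impI assms(1-8))
  fix x assume "x \<in> carrier_of X"
  then show "l0 (f x) = l1 (g x)"
    by (rule commute)
next
  fix Q :: "'q metobj" and h0 h1
  assume Q: "metch Q \<and> mor Y Q h0 \<and> mor Z Q h1 \<and> (\<forall>x\<in>carrier_of X. h0 (f x) = h1 (g x))"
  obtain TQ dQ where "Q = (TQ, dQ)"
    by fastforce
  then obtain k where k: "mor P Q k" "\<forall>y\<in>carrier_of Y. k (l0 y) = h0 y" "\<forall>z\<in>carrier_of Z. k (l1 z) = h1 z"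
    using factor[of TQ dQ h0 h1] Q by (auto simp: metch_iff_metch_space)
  have unique: "\<forall>p\<in>carrier_of P. k' p = k p"
    if "\<forall>y\<in>carrier_of Y. k' (l0 y) = h0 y" "\<forall>z\<in>carrier_of Z. k' (l1 z) = h1 z" for k'
    using that k(2,3) jointly_surjective by fastforce
  show "\<exists>k. mor P Q k \<and> (\<forall>y\<in>carrier_of Y. k (l0 y) = h0 y) \<and> (\<forall>z\<in>carrier_of Z. k (l1 z) = h1 z) \<and>
      (\<forall>k'. mor P Q k' \<and> (\<forall>y\<in>carrier_of Y. k' (l0 y) = h0 y) \<and> (\<forall>z\<in>carrier_of Z. k' (l1 z) = h1 z)
         \<longrightarrow> (\<forall>p\<in>carrier_of P. k' p = k p))"
    using k unique by blast
qed

lemma (in metch_space) metch_space_subtopology: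
  assumes "closedin T A"
  shows "metch_space (subtopology T A) d"
proof
  show "compact_space (subtopology T A)"
    using assms compact by (simp add: closedin_compact_space compact_space_subtopology)
  show "Hausdorff_space (subtopology T A)"
    using Hausdorff by (rule Hausdorff_space_subtopology)
  have "continuous_map (prod_topology (subtopology T A) (subtopology T A)) (prod_topology T T) id"
    by (simp add: continuous_map_in_subtopology prod_topology_subtopology continuous_map_from_subtopology)
  then show "lsc (prod_topology (subtopology T A) (subtopology T A)) (\<lambda>p. d (fst p) (snd p))"
    using lsc_compose[OF _ lsc] by (simp add: id_def)
qed (use triangle separated in auto)

section \<open>Equivalence corelations\<close>

text \<open>The parameters \<open>e\<close> and \<open>sw\<close> witness reflexivity and symmetry.\<close>

locale equiv_corel =
  fixes TX :: "'x topology" and dX :: "'x \<Rightarrow> 'x \<Rightarrow> ennreal"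
    and TS :: "'s topology" and dS :: "'s \<Rightarrow> 's \<Rightarrow> ennreal"
    and q0 q1 :: "'x \<Rightarrow> 's" and e :: "'s \<Rightarrow> 'x" and sw :: "'s \<Rightarrow> 's"
  assumes metch_X: "metch (TX, dX)" and metch_S: "metch (TS, dS)"
    and mor_q0: "mor (TX, dX) (TS, dS) q0" and mor_q1: "mor (TX, dX) (TS, dS) q1"
    and cover: "topspace TS = q0 ` topspace TX \<union> q1 ` topspace TX"
    and mor_e: "mor (TS, dS) (TX, dX) e"
    and e_q0 [simp]: "\<And>x. x \<in> topspace TX \<Longrightarrow> e (q0 x) = x"
    and e_q1 [simp]: "\<And>x. x \<in> topspace TX \<Longrightarrow> e (q1 x) = x"
    and mor_sw: "mor (TS, dS) (TS, dS) sw"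
    and sw_q0: "\<And>x. x \<in> topspace TX \<Longrightarrow> sw (q0 x) = q1 x"
    and sw_q1: "\<And>x. x \<in> topspace TX \<Longrightarrow> sw (q1 x) = q0 x"

sublocale equiv_corel \<subseteq> X: metch_space TX dX
  using metch_X by (simp add: metch_iff_metch_space)

sublocale equiv_corel \<subseteq> S: metch_space TS dS
  using metch_S by (simp add: metch_iff_metch_space)

text \<open>The mirror image \<open>swap.thm\<close> of a lemma \<open>thm\<close>
  proved in a context block becomes available from the next block on.\<close>

sublocale equiv_corel \<subseteq> swap: equiv_corel TX dX TS dS q1 q0 e sw
  by unfold_locales (use metch_X metch_S mor_q0 mor_q1 cover mor_e mor_sw sw_q0 sw_q1 in auto)

context equiv_corel
begin

abbreviation X where "X \<equiv> topspace TX"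
abbreviation S where "S \<equiv> topspace TS"

lemma q0_in [simp]: "x \<in> X \<Longrightarrow> q0 x \<in> S"
  using mor_q0 by (rule mor_in_topspace)

lemma e_in [simp]: "s \<in> S \<Longrightarrow> e s \<in> X"
  using mor_e by (rule mor_in_topspace)

lemma closedin_q0_image: "closedin TS (q0 ` X)"
  using compactin_imp_closedin[OF S.Hausdorff image_compactin[OF _ mor_continuous_map[OF mor_q0]]] X.compact
  by (simp add: compact_space_def)

lemma S_cases:
  assumes "s \<in> S"
  obtains x where "x \<in> X" "s = q0 x" | x where "x \<in> X" "s = q1 x"
  using assms cover by blast

lemma dist_q0 [simp]: "\<lbrakk>x \<in> X; y \<in> X\<rbrakk> \<Longrightarrow> dS (q0 x) (q0 y) = dX x y"
  using mor_nonexpansive[OF mor_q0, of x y] mor_nonexpansive[OF mor_e, of "q0 x" "q0 y"]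
  by (simp add: antisym)

end

context equiv_corel
begin

lemma q0_eq_q1D: "\<lbrakk>x \<in> X; y \<in> X; q0 x = q1 y\<rbrakk> \<Longrightarrow> x = y"
  by (metis e_q0 e_q1)

lemma dX_le_cross: "\<lbrakk>x \<in> X; y \<in> X\<rbrakk> \<Longrightarrow> dX x y \<le> dS (q0 x) (q1 y)"
  using mor_nonexpansive[OF mor_e, of "q0 x" "q1 y"] swap.q0_in by simp

lemma cross_swap: "\<lbrakk>x \<in> X; y \<in> X\<rbrakk> \<Longrightarrow> dS (q1 x) (q0 y) = dS (q0 x) (q1 y)"
  using mor_nonexpansive[OF mor_sw, of "q0 x" "q1 y"] mor_nonexpansive[OF mor_sw, of "q1 x" "q0 y"]
  by (simp add: sw_q0 sw_q1 swap.q0_in antisym)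

definition copair :: "('x \<Rightarrow> 'q) \<Rightarrow> ('x \<Rightarrow> 'q) \<Rightarrow> 's \<Rightarrow> 'q" where
  "copair h0 h1 s = (if s \<in> q0 ` X then h0 (e s) else h1 (e s))"

lemma copair_q0 [simp]: "x \<in> X \<Longrightarrow> copair h0 h1 (q0 x) = h0 x"
  by (simp add: copair_def)

lemma copair_q1 [simp]:
  assumes agree: "\<And>a. \<lbrakk>a \<in> X; q0 a = q1 a\<rbrakk> \<Longrightarrow> h0 a = h1 a" and "x \<in> X"
  shows "copair h0 h1 (q1 x) = h1 x"
proof (cases "q1 x \<in> q0 ` X")
  case True
  then obtain y where "y \<in> X" "q0 y = q1 x"
    by auto
  moreover from this have "y = x"
    using q0_eq_q1D assms(2) by blast
  ultimately show ?thesis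
    using True assms by (simp add: copair_def)
qed (simp add: copair_def assms(2))

lemma continuous_map_copair:
  assumes "continuous_map TX TQ h0" "continuous_map TX TQ h1"
    and agree: "\<And>a. \<lbrakk>a \<in> X; q0 a = q1 a\<rbrakk> \<Longrightarrow> h0 a = h1 a"
  shows "continuous_map TS TQ (copair h0 h1)"
  unfolding copair_def[abs_def]
proof (rule continuous_map_if_closedin)
  show "continuous_map TS TQ (\<lambda>s. h0 (e s))" "continuous_map TS TQ (\<lambda>s. h1 (e s))"
    using continuous_map_compose[OF mor_continuous_map[OF mor_e] assms(1)]
      continuous_map_compose[OF mor_continuous_map[OF mor_e] assms(2)] by (simp_all add: o_def)
  show "closedin TS (q0 ` X)" "closedin TS (q1 ` X)"
    by (fact closedin_q0_image swap.closedin_q0_image)+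
  show "S \<subseteq> q0 ` X \<union> q1 ` X"
    using cover by simp
  fix s assume "s \<in> q0 ` X" "s \<in> q1 ` X"
  then obtain x y where xy: "x \<in> X" "y \<in> X" "s = q0 x" "q0 x = q1 y"
    by auto
  then have "x = y"
    by (intro q0_eq_q1D)
  then show "h0 (e s) = h1 (e s)"
    using xy agree by simp
qed

text \<open>In the pushout of \<open>q1\<close> and \<open>q0\<close>, the distance from \<open>s\<close> in the first copy of \<open>S\<close> to \<open>s'\<close> in
  the second one; as \<open>q0\<close> and \<open>q1\<close> are isometric embeddings, paths crossing once suffice.\<close>

definition bridge :: "'s \<Rightarrow> 's \<Rightarrow> ennreal" where
  "bridge s s' = (INF z\<in>X. dS s (q1 z) + dS (q0 z) s')"

lemma bridge_le: "z \<in> X \<Longrightarrow> bridge s s' \<le> dS s (q1 z) + dS (q0 z) s'"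
  unfolding bridge_def by (rule INF_lower)

lemma lsc_bridge_path:
  "lsc (prod_topology (prod_topology TS TS) TX) (\<lambda>w. dS (fst (fst w)) (q1 (snd w)) + dS (q0 (snd w)) (snd (fst w)))"
proof -
  let ?W = "prod_topology (prod_topology TS TS) TX"
  have fst: "continuous_map ?W TS (\<lambda>w. fst (fst w))" and snd: "continuous_map ?W TS (\<lambda>w. snd (fst w))"
    using continuous_map_compose[OF continuous_map_fst continuous_map_fst]
      continuous_map_compose[OF continuous_map_fst continuous_map_snd] by (simp_all add: o_def)
  have "continuous_map ?W TS (\<lambda>w. q0 (snd w))" "continuous_map ?W TS (\<lambda>w. q1 (snd w))"
    using continuous_map_compose[OF continuous_map_snd mor_continuous_map[OF mor_q0]]
      continuous_map_compose[OF continuous_map_snd mor_continuous_map[OF mor_q1]] by (simp_all add: o_def)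
  then have left: "continuous_map ?W (prod_topology TS TS) (\<lambda>w. (fst (fst w), q1 (snd w)))"
    and right: "continuous_map ?W (prod_topology TS TS) (\<lambda>w. (q0 (snd w), snd (fst w)))"
    using fst snd by (simp_all add: continuous_map_pairedI)
  show ?thesis
    using lsc_add[OF lsc_compose[OF left S.lsc] lsc_compose[OF right S.lsc]] by simp
qed

lemma lsc_bridge: "lsc (prod_topology TS TS) (\<lambda>p. bridge (fst p) (snd p))"
  using lsc_INF_fibre[OF X.compact lsc_bridge_path] by (simp add: bridge_def)

lemma bridge_attained:
  assumes "s \<in> S" "s' \<in> S"
  obtains z where "z \<in> X" "bridge s s' = dS s (q1 z) + dS (q0 z) s'"
proof -
  have "X \<noteq> {}"
    using assms(1) cover by auto
  moreover have "lsc TX (\<lambda>z. dS s (q1 z) + dS (q0 z) s')"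
    using lsc_fibre[OF lsc_bridge_path, of "(s, s')"] assms by simp
  ultimately obtain z where "z \<in> X" "(INF z\<in>X. dS s (q1 z) + dS (q0 z) s') = dS s (q1 z) + dS (q0 z) s'"
    using lsc_attains_INF[OF X.compact] by blast
  then show thesis
    using that unfolding bridge_def by blast
qed

lemma bridge_q1_left:
  assumes "x \<in> X" "s' \<in> S"
  shows "bridge (q1 x) s' = dS (q0 x) s'"
proof (rule antisym)
  show "bridge (q1 x) s' \<le> dS (q0 x) s'"
    using bridge_le[OF assms(1), of "q1 x" s'] assms by simp
  obtain z where z: "z \<in> X" "bridge (q1 x) s' = dS (q1 x) (q1 z) + dS (q0 z) s'"
    using bridge_attained[OF swap.q0_in[OF assms(1)] assms(2)] by blast
  have "dS (q0 x) s' \<le> dS (q0 x) (q0 z) + dS (q0 z) s'"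
    using S.triangle[of "q0 x" "q0 z" s'] assms z by simp
  also have "\<dots> = bridge (q1 x) s'"
    using z assms by simp
  finally show "dS (q0 x) s' \<le> bridge (q1 x) s'" .
qed

lemma bridge_q0_right:
  assumes "y \<in> X" "s \<in> S"
  shows "bridge s (q0 y) = dS s (q1 y)"
proof (rule antisym)
  show "bridge s (q0 y) \<le> dS s (q1 y)"
    using bridge_le[OF assms(1), of s "q0 y"] assms by simp
  obtain z where z: "z \<in> X" "bridge s (q0 y) = dS s (q1 z) + dS (q0 z) (q0 y)"
    using bridge_attained[OF assms(2) q0_in[OF assms(1)]] by blast
  have "dS s (q1 y) \<le> dS s (q1 z) + dS (q1 z) (q1 y)"
    using S.triangle[of s "q1 z" "q1 y"] assms z by simp
  also have "\<dots> = bridge s (q0 y)"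
    using z assms by simp
  finally show "dS s (q1 y) \<le> bridge s (q0 y)" .
qed

lemma bridge_triangle_left:
  assumes "s1 \<in> S" "s2 \<in> S" "s3 \<in> S"
  shows "bridge s1 s3 \<le> dS s1 s2 + bridge s2 s3"
proof -
  obtain z where z: "z \<in> X" "bridge s2 s3 = dS s2 (q1 z) + dS (q0 z) s3"
    using bridge_attained assms by metis
  have "bridge s1 s3 \<le> dS s1 (q1 z) + dS (q0 z) s3"
    using bridge_le z by blast
  also have "\<dots> \<le> (dS s1 s2 + dS s2 (q1 z)) + dS (q0 z) s3"
    using S.triangle assms z by (intro add_right_mono) simp
  also have "\<dots> = dS s1 s2 + bridge s2 s3"
    using z by (simp add: add.assoc)
  finally show ?thesis .
qed

lemma bridge_triangle_right:
  assumes "s1 \<in> S" "s2 \<in> S" "s3 \<in> S"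
  shows "bridge s1 s3 \<le> bridge s1 s2 + dS s2 s3"
proof -
  obtain z where z: "z \<in> X" "bridge s1 s2 = dS s1 (q1 z) + dS (q0 z) s2"
    using bridge_attained assms by metis
  have "bridge s1 s3 \<le> dS s1 (q1 z) + dS (q0 z) s3"
    using bridge_le z by blast
  also have "\<dots> \<le> dS s1 (q1 z) + (dS (q0 z) s2 + dS s2 s3)"
    using S.triangle assms z by (intro add_left_mono) simp
  also have "\<dots> = bridge s1 s2 + dS s2 s3"
    using z by (simp add: add.assoc)
  finally show ?thesis .
qed

end

context equiv_corel
begin

text \<open>Two consecutive bridges cross back through \<open>q1 z\<close>, \<open>q1 w\<close>, and \<open>dS (q1 z) (q1 w) = dS (q0 z) (q0 w)\<close>.\<close>

lemma dist_le_bridge_bridge: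
  assumes "s1 \<in> S" "s2 \<in> S" "s3 \<in> S"
  shows "dS s1 s3 \<le> bridge s1 s2 + swap.bridge s2 s3"
proof -
  obtain z where z: "z \<in> X" "bridge s1 s2 = dS s1 (q1 z) + dS (q0 z) s2"
    using bridge_attained assms by metis
  obtain w where w: "w \<in> X" "swap.bridge s2 s3 = dS s2 (q0 w) + dS (q1 w) s3"
    using swap.bridge_attained assms by metis
  have "dS s1 s3 \<le> dS s1 (q1 z) + dS (q1 z) (q1 w) + dS (q1 w) s3"
    using S.triangle[of s1 "q1 z" s3] S.triangle[of "q1 z" "q1 w" s3] assms z w
    by (simp add: add.assoc add_left_mono order_trans)
  also have "dS (q1 z) (q1 w) = dS (q0 z) (q0 w)"
    using z w by simp
  also have "dS s1 (q1 z) + dS (q0 z) (q0 w) + dS (q1 w) s3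
      \<le> dS s1 (q1 z) + (dS (q0 z) s2 + dS s2 (q0 w)) + dS (q1 w) s3"
    using S.triangle[of "q0 z" s2 "q0 w"] assms z w by (simp add: add_left_mono add_right_mono)
  also have "\<dots> = bridge s1 s2 + swap.bridge s2 s3"
    using z w by (simp add: ac_simps)
  finally show ?thesis .
qed

lemma bridge_eq_0D:
  assumes "s \<in> S" "s' \<in> S" "bridge s s' = 0" "swap.bridge s' s = 0"
  obtains x where "x \<in> X" "s = q1 x" "s' = q0 x"
proof -
  obtain z where z: "z \<in> X" "dS s (q1 z) = 0" "dS (q0 z) s' = 0"
    using bridge_attained[OF assms(1,2)] assms(3) by (metis add_eq_0_iff_both_eq_0)
  obtain w where w: "w \<in> X" "dS s' (q0 w) = 0" "dS (q1 w) s = 0"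
    using swap.bridge_attained[OF assms(2,1)] assms(4) by (metis add_eq_0_iff_both_eq_0)
  have "dX z w \<le> dS (q0 z) s' + dS s' (q0 w)"
    using S.triangle[of "q0 z" s' "q0 w"] assms z w by simp
  moreover have "dX w z \<le> dS (q1 w) s + dS s (q1 z)"
    using S.triangle[of "q1 w" s "q1 z"] assms z w by simp
  ultimately have "z = w"
    using X.separated z w by (simp add: le_zero_eq)
  then show ?thesis
    using that z w S.separated assms(1,2) by simp
qed

lemma bridge_nonexpansive:
  assumes "metch_space TQ dQ" "mor (TS, dS) (TQ, dQ) g0" "mor (TS, dS) (TQ, dQ) g1"
    and glued: "\<And>x. x \<in> X \<Longrightarrow> g0 (q1 x) = g1 (q0 x)"
    and "s \<in> S" "s' \<in> S"
  shows "dQ (g0 s) (g1 s') \<le> bridge s s'"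
proof -
  obtain z where z: "z \<in> X" "bridge s s' = dS s (q1 z) + dS (q0 z) s'"
    using bridge_attained assms(5,6) by metis
  have "dQ (g0 s) (g1 s') \<le> dQ (g0 s) (g0 (q1 z)) + dQ (g0 (q1 z)) (g1 s')"
    using metch_space.triangle[OF assms(1)] mor_in_topspace[OF assms(2)] mor_in_topspace[OF assms(3)]
      assms(5,6) z(1) by simp
  also have "\<dots> = dQ (g0 s) (g0 (q1 z)) + dQ (g1 (q0 z)) (g1 s')"
    using glued z(1) by simp
  also have "\<dots> \<le> dS s (q1 z) + dS (q0 z) s'"
    using mor_nonexpansive[OF assms(2)] mor_nonexpansive[OF assms(3)] assms(5,6) z(1)
    by (intro add_mono) simp_all
  finally show ?thesis
    using z(2) by simp
qed

section \<open>The glued pushout\<close>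

text \<open>The pushout of \<open>q1\<close> and \<open>q0\<close>: the first copy of \<open>S\<close> is \<open>Inl ` S\<close>, and \<open>glue1\<close> maps the
  second copy onto \<open>Inr\<close>, except that \<open>q0 x\<close> goes to \<open>Inl (q1 x)\<close>. The maps \<open>pr0\<close> and \<open>pr1\<close>
  are induced by \<open>(id, q1 \<circ> e)\<close> and \<open>(q0 \<circ> e, id)\<close>; together they embed \<open>P\<close> into \<open>S \<times> S\<close>,
  which supplies the topology.\<close>

definition glue1 :: "'s \<Rightarrow> 's + 's" where
  "glue1 s = (if s \<in> q0 ` X then Inl (q1 (e s)) else Inr s)"

definition P :: "('s + 's) set" where
  "P = Inl ` S \<union> glue1 ` S"

definition pr0 :: "'s + 's \<Rightarrow> 's" where
  "pr0 w = (case w of Inl s \<Rightarrow> s | Inr s \<Rightarrow> q1 (e s))"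

definition pr1 :: "'s + 's \<Rightarrow> 's" where
  "pr1 w = (case w of Inl s \<Rightarrow> q0 (e s) | Inr s \<Rightarrow> s)"

definition TP :: "('s + 's) topology" where
  "TP = pullback_topology P (\<lambda>w. (pr0 w, pr1 w)) (prod_topology TS TS)"

definition dP :: "'s + 's \<Rightarrow> 's + 's \<Rightarrow> ennreal" where
  "dP w w' = (case w of
      Inl s \<Rightarrow> (case w' of Inl s' \<Rightarrow> dS s s' | Inr s' \<Rightarrow> bridge s s')
    | Inr s \<Rightarrow> (case w' of Inl s' \<Rightarrow> swap.bridge s s' | Inr s' \<Rightarrow> dS s s'))"

lemma glue1_q0 [simp]: "x \<in> X \<Longrightarrow> glue1 (q0 x) = Inl (q1 x)"
  unfolding glue1_def by auto

lemma pr0_Inl [simp]: "pr0 (Inl s) = s"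
  and pr1_Inl [simp]: "pr1 (Inl s) = q0 (e s)"
  by (simp_all add: pr0_def pr1_def)

lemma pr0_glue1 [simp]: "s \<in> S \<Longrightarrow> pr0 (glue1 s) = q1 (e s)"
  and pr1_glue1 [simp]: "s \<in> S \<Longrightarrow> pr1 (glue1 s) = s"
  by (auto simp: glue1_def pr0_def pr1_def)

lemma Inl_eq_glue1D:
  assumes "s \<in> S" "s' \<in> S" "Inl s = glue1 s'"
  obtains x where "x \<in> X" "s = q1 x" "s' = q0 x"
  using assms unfolding glue1_def by (auto split: if_splits)

lemma P_cases:
  assumes "w \<in> P"
  obtains s where "s \<in> S" "w = Inl s" | s where "s \<in> S" "w = glue1 s"
  using assms unfolding P_def by blast

lemma inj_on_pr0_pr1: "inj_on (\<lambda>w. (pr0 w, pr1 w)) P"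
proof (rule inj_onI)
  fix w w' assume "w \<in> P" "w' \<in> P" and eq: "(pr0 w, pr1 w) = (pr0 w', pr1 w')"
  have glued: "Inl s = glue1 s'" if "s \<in> S" "s' \<in> S" "s = q1 (e s')" "q0 (e s) = s'" for s s'
  proof -
    have "s' \<in> q0 ` X"
      using that by (metis e_in image_eqI)
    then show ?thesis
      using that unfolding glue1_def by simp
  qed
  from \<open>w \<in> P\<close> \<open>w' \<in> P\<close> eq show "w = w'"
    by (elim P_cases) (auto intro: glued sym[OF glued])
qed

lemma topspace_TP [simp]: "topspace TP = P"
  unfolding TP_def topspace_pullback_topology by (auto simp: P_def swap.q0_in)

lemma continuous_map_pr0_pr1: "continuous_map TP (prod_topology TS TS) (\<lambda>w. (pr0 w, pr1 w))"
  unfolding TP_def using continuous_map_pullback[OF continuous_map_id] by (simp add: o_def)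

lemma continuous_map_pr0: "continuous_map TP TS pr0"
  and continuous_map_pr1: "continuous_map TP TS pr1"
  using continuous_map_pr0_pr1 by (simp_all add: continuous_map_paired)

lemma continuous_map_Inl: "continuous_map TS TP Inl"
  unfolding TP_def
proof (rule continuous_map_pullback')
  have "continuous_map TS TS (\<lambda>s. q0 (e s))"
    using continuous_map_compose[OF mor_continuous_map[OF mor_e] mor_continuous_map[OF mor_q0]]
    by (simp add: o_def)
  then show "continuous_map TS (prod_topology TS TS) ((\<lambda>w. (pr0 w, pr1 w)) \<circ> Inl)"
    by (simp add: o_def continuous_map_paired)
qed (auto simp: P_def)

lemma continuous_map_glue1: "continuous_map TS TP glue1"
  unfolding TP_def
proof (rule continuous_map_pullback')
  have "continuous_map TS TS (\<lambda>s. q1 (e s))"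
    using continuous_map_compose[OF mor_continuous_map[OF mor_e] mor_continuous_map[OF mor_q1]]
    by (simp add: o_def)
  then have "continuous_map TS (prod_topology TS TS) (\<lambda>s. (q1 (e s), s))"
    by (simp add: continuous_map_paired)
  then show "continuous_map TS (prod_topology TS TS) ((\<lambda>w. (pr0 w, pr1 w)) \<circ> glue1)"
    by (rule continuous_map_eq) simp
qed (auto simp: P_def)

lemma compact_TP: "compact_space TP"
  using compactin_Un[OF image_compactin[OF _ continuous_map_Inl] image_compactin[OF _ continuous_map_glue1]]
    S.compact unfolding compact_space_def by (simp add: P_def)

lemma Hausdorff_TP: "Hausdorff_space TP"
  using Hausdorff_space_injective_preimage[OF _ continuous_map_pr0_pr1] S.Hausdorff inj_on_pr0_pr1
  by (simp add: Hausdorff_space_prod_topology)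

lemma closedin_Inl_image: "closedin TP (Inl ` S)"
  and closedin_glue1_image: "closedin TP (glue1 ` S)"
  using S.compact Hausdorff_TP
  by (auto intro!: compactin_imp_closedin image_compactin[OF _ continuous_map_Inl]
      image_compactin[OF _ continuous_map_glue1] simp: compact_space_def)

end

context equiv_corel
begin

lemma dP_Inl_Inl [simp]: "dP (Inl s) (Inl s') = dS s s'"
  by (simp add: dP_def)

lemma dP_Inl_glue1 [simp]: "\<lbrakk>s \<in> S; s' \<in> S\<rbrakk> \<Longrightarrow> dP (Inl s) (glue1 s') = bridge s s'"
  by (auto simp: glue1_def dP_def bridge_q0_right)

lemma dP_glue1_Inl [simp]: "\<lbrakk>s \<in> S; s' \<in> S\<rbrakk> \<Longrightarrow> dP (glue1 s) (Inl s') = swap.bridge s s'"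
  by (auto simp: glue1_def dP_def swap.bridge_q1_left)

lemma dP_glue1_glue1 [simp]: "\<lbrakk>s \<in> S; s' \<in> S\<rbrakk> \<Longrightarrow> dP (glue1 s) (glue1 s') = dS s s'"
  by (auto simp: glue1_def dP_def bridge_q1_left swap.bridge_q0_right)

lemma dP_triangle:
  assumes "w1 \<in> P" "w2 \<in> P" "w3 \<in> P"
  shows "dP w1 w3 \<le> dP w1 w2 + dP w2 w3"
  using assms
  by (elim P_cases; simp add: S.triangle bridge_triangle_left bridge_triangle_right
      swap.bridge_triangle_left swap.bridge_triangle_right dist_le_bridge_bridge swap.dist_le_bridge_bridge)

lemma dP_separated:
  assumes "w \<in> P" "w' \<in> P" "dP w w' = 0" "dP w' w = 0"
  shows "w = w'"
  using assms
proof (elim P_cases)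
  fix s s' assume "s \<in> S" "s' \<in> S" "w = Inl s" "w' = glue1 s'"
  then show "w = w'"
    using assms(3,4) by (auto elim: bridge_eq_0D)
next
  fix s s' assume "s \<in> S" "s' \<in> S" "w = glue1 s" "w' = Inl s'"
  then show "w = w'"
    using assms(3,4) by (auto elim: bridge_eq_0D)
qed (use S.separated in auto)

text \<open>A sublevel set of \<open>dP\<close> is the union of the images of four compact sublevel sets in \<open>S \<times> S\<close>.\<close>

lemma lsc_dP: "lsc (prod_topology TP TP) (\<lambda>p. dP (fst p) (snd p))"
  unfolding lsc_iff_closedin_sublevel
proof
  fix u
  define K where "K F i j = (\<lambda>p. (i (fst p), j (snd p))) ` {p \<in> S \<times> S. F (fst p) (snd p) \<le> u}"
    for F :: "'s \<Rightarrow> 's \<Rightarrow> ennreal" and i j :: "'s \<Rightarrow> 's + 's"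
  have closed_K: "closedin (prod_topology TP TP) (K F i j)"
    if "lsc (prod_topology TS TS) (\<lambda>p. F (fst p) (snd p))"
      "continuous_map TS TP i" "continuous_map TS TP j" for F i j
  proof -
    have "compactin (prod_topology TS TS) {p \<in> S \<times> S. F (fst p) (snd p) \<le> u}"
      using closedin_compact_space[OF _ lsc_closedin_sublevel[OF that(1)]] S.compact
      by (simp add: compact_space_prod_topology)
    moreover have "continuous_map (prod_topology TS TS) (prod_topology TP TP) (\<lambda>p. (i (fst p), j (snd p)))"
      using continuous_map_compose[OF continuous_map_fst that(2)] continuous_map_compose[OF continuous_map_snd that(3)]
      by (simp add: continuous_map_paired o_def del: continuous_map_compose) blast
    ultimately show ?thesis
      unfolding K_def using Hausdorff_TP
      by (intro compactin_imp_closedin image_compactin) (auto simp: Hausdorff_space_prod_topology)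
  qed
  have "{p \<in> topspace (prod_topology TP TP). dP (fst p) (snd p) \<le> u}
      = K dS Inl Inl \<union> K bridge Inl glue1 \<union> K swap.bridge glue1 Inl \<union> K dS glue1 glue1"
  proof (intro equalityI subsetI)
    fix p assume "p \<in> {p \<in> topspace (prod_topology TP TP). dP (fst p) (snd p) \<le> u}"
    then obtain w w' where "p = (w, w')" "w \<in> P" "w' \<in> P" "dP w w' \<le> u"
      by (cases p) auto
    then show "p \<in> K dS Inl Inl \<union> K bridge Inl glue1 \<union> K swap.bridge glue1 Inl \<union> K dS glue1 glue1"
      unfolding K_def by (elim P_cases) (simp_all add: image_iff; blast)+
  qed (auto simp: K_def P_def)
  also have "closedin (prod_topology TP TP) \<dots>"
    by (intro closedin_Un closed_K S.lsc lsc_bridge swap.lsc_bridge continuous_map_Inl continuous_map_glue1)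
  finally show "closedin (prod_topology TP TP) {p \<in> topspace (prod_topology TP TP). dP (fst p) (snd p) \<le> u}" .
qed

lemma metch_P: "metch (TP, dP)"
  unfolding metch_iff_metch_space
  by unfold_locales (auto simp: compact_TP Hausdorff_TP dP_triangle dP_separated lsc_dP elim: P_cases)

lemma mor_Inl: "mor (TS, dS) (TP, dP) Inl"
  by (simp add: mor_iff continuous_map_Inl)

lemma mor_glue1: "mor (TS, dS) (TP, dP) glue1"
  by (simp add: mor_iff continuous_map_glue1)

definition glue_map :: "('s \<Rightarrow> 'q) \<Rightarrow> ('s \<Rightarrow> 'q) \<Rightarrow> 's + 's \<Rightarrow> 'q" where
  "glue_map g0 g1 w = (if w \<in> Inl ` S then g0 (pr0 w) else g1 (pr1 w))"

lemma glue_map_Inl [simp]: "s \<in> S \<Longrightarrow> glue_map g0 g1 (Inl s) = g0 s"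
  by (simp add: glue_map_def)

lemma glue_map_glue1 [simp]:
  assumes glued: "\<And>x. x \<in> X \<Longrightarrow> g0 (q1 x) = g1 (q0 x)" and "s \<in> S"
  shows "glue_map g0 g1 (glue1 s) = g1 s"
proof (cases "glue1 s \<in> Inl ` S")
  case True
  then obtain s' where s': "s' \<in> S" "Inl s' = glue1 s"
    by auto
  then obtain x where "x \<in> X" "s' = q1 x" "s = q0 x"
    using Inl_eq_glue1D[OF s'(1) assms(2) s'(2)] by blast
  then show ?thesis
    using s' glued unfolding glue_map_def by (metis pr0_Inl rev_image_eqI)
qed (simp add: glue_map_def assms(2))

lemma continuous_map_glue_map:
  assumes "continuous_map TS TQ g0" "continuous_map TS TQ g1"
    and glued: "\<And>x. x \<in> X \<Longrightarrow> g0 (q1 x) = g1 (q0 x)"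
  shows "continuous_map TP TQ (glue_map g0 g1)"
  unfolding glue_map_def[abs_def]
proof (rule continuous_map_if_closedin)
  show "continuous_map TP TQ (\<lambda>w. g0 (pr0 w))" "continuous_map TP TQ (\<lambda>w. g1 (pr1 w))"
    using continuous_map_compose[OF continuous_map_pr0 assms(1)]
      continuous_map_compose[OF continuous_map_pr1 assms(2)] by (simp_all add: o_def)
  show "closedin TP (Inl ` S)" "closedin TP (glue1 ` S)" "topspace TP \<subseteq> Inl ` S \<union> glue1 ` S"
    by (simp_all add: closedin_Inl_image closedin_glue1_image P_def)
  fix w assume "w \<in> Inl ` S" "w \<in> glue1 ` S"
  then obtain s s' where s: "s \<in> S" "s' \<in> S" "w = Inl s" "w = glue1 s'"
    by blast
  then obtain x where "x \<in> X" "s = q1 x" "s' = q0 x"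
    by (metis Inl_eq_glue1D)
  then show "g0 (pr0 w) = g1 (pr1 w)"
    using s glued by simp
qed

lemma mor_glue_map:
  assumes Q: "metch_space TQ dQ" and g0: "mor (TS, dS) (TQ, dQ) g0" and g1: "mor (TS, dS) (TQ, dQ) g1"
    and glued: "\<And>x. x \<in> X \<Longrightarrow> g0 (q1 x) = g1 (q0 x)"
  shows "mor (TP, dP) (TQ, dQ) (glue_map g0 g1)"
proof -
  have "dQ (glue_map g0 g1 w) (glue_map g0 g1 w') \<le> dP w w'" if "w \<in> P" "w' \<in> P" for w w'
    using that
  proof (elim P_cases)
    fix s s' assume "s \<in> S" "s' \<in> S" "w = Inl s" "w' = glue1 s'"
    then show ?thesis
      using bridge_nonexpansive[OF Q g0 g1 glued] glued by simp
  next
    fix s s' assume "s \<in> S" "s' \<in> S" "w = glue1 s" "w' = Inl s'"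
    then show ?thesis
      using swap.bridge_nonexpansive[OF Q g1 g0 glued[symmetric]] glued by simp
  qed (simp_all add: glued mor_nonexpansive[OF g0] mor_nonexpansive[OF g1])
  then show ?thesis
    using continuous_map_glue_map[OF mor_continuous_map[OF g0] mor_continuous_map[OF g1] glued]
    by (simp add: mor_iff)
qed

lemma pushout_glue: "pushout_wrt TYPE('s + 's) (TX, dX) (TS, dS) (TS, dS) q1 q0 (TP, dP) Inl glue1"
proof (rule pushout_wrtI)
  show "metch (TX, dX)" "metch (TS, dS)" "metch (TS, dS)" "metch (TP, dP)"
    by (fact metch_X metch_S metch_S metch_P)+
  show "mor (TX, dX) (TS, dS) q1" "mor (TX, dX) (TS, dS) q0" "mor (TS, dS) (TP, dP) Inl" "mor (TS, dS) (TP, dP) glue1"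
    by (fact mor_q1 mor_q0 mor_Inl mor_glue1)+
  show "Inl (q1 x) = glue1 (q0 x)" if "x \<in> carrier_of (TX, dX)" for x
    using that by (simp add: carrier_of_def)
  show "carrier_of (TP, dP) \<subseteq> Inl ` carrier_of (TS, dS) \<union> glue1 ` carrier_of (TS, dS)"
    by (simp add: carrier_of_def P_def)
next
  fix TQ :: "('s + 's) topology" and dQ g0 g1
  assume "metch_space TQ dQ" "mor (TS, dS) (TQ, dQ) g0" "mor (TS, dS) (TQ, dQ) g1"
    and "\<And>x. x \<in> carrier_of (TX, dX) \<Longrightarrow> g0 (q1 x) = g1 (q0 x)"
  then show "\<exists>k. mor (TP, dP) (TQ, dQ) k \<and> (\<forall>s\<in>carrier_of (TS, dS). k (Inl s) = g0 s) \<and>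
      (\<forall>s\<in>carrier_of (TS, dS). k (glue1 s) = g1 s)"
    by (intro exI[of _ "glue_map g0 g1"]) (simp add: carrier_of_def mor_glue_map)
qed

section \<open>Weak transitivity and effectiveness\<close>

text \<open>The transitivity map sends \<open>q0 x\<close> and \<open>q1 y\<close> into different copies of \<open>S\<close> in the
  glued pushout, so their distance there is a bridge, which is attained at some \<open>z\<close>.\<close>

lemma cross_weakly_transitive:
  assumes "transitive_corel (TX, dX) (TS, dS) q0 q1" "x \<in> X" "y \<in> X"
  obtains z where "z \<in> X" "dS (q0 x) (q1 z) + dS (q0 z) (q1 y) \<le> dS (q0 x) (q1 y)"
proof -
  obtain t where t: "mor (TS, dS) (TP, dP) t"
    "\<forall>x\<in>carrier_of (TX, dX). t (q0 x) = Inl (q0 x) \<and> t (q1 x) = glue1 (q1 x)"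
    using assms(1) pushout_glue unfolding transitive_corel_def by blast
  have "bridge (q0 x) (q1 y) = dP (t (q0 x)) (t (q1 y))"
    using t(2) assms(2,3) by (simp add: carrier_of_def swap.q0_in)
  also have "\<dots> \<le> dS (q0 x) (q1 y)"
    using mor_nonexpansive[OF t(1)] assms(2,3) by (simp add: swap.q0_in)
  finally show thesis
    using bridge_attained[OF q0_in[OF assms(2)] swap.q0_in[OF assms(3)]] that by metis
qed

text \<open>The pairs are preordered by \<open>detour a b \<le> c a\<close>: going from \<open>fst a\<close> to \<open>snd a\<close> through the
  crossing \<open>b\<close> costs no more than crossing at \<open>a\<close> directly.\<close>

definition detour :: "'x \<times> 'x \<Rightarrow> 'x \<times> 'x \<Rightarrow> ennreal" where
  "detour a b = dX (fst a) (fst b) + dS (q0 (fst b)) (q1 (snd b)) + dX (snd b) (snd a)"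

lemma detour_self: "a \<in> X \<times> X \<Longrightarrow> detour a a = dS (q0 (fst a)) (q1 (snd a))"
  by (auto simp: detour_def)

lemma cross_le_detour: "dS (q0 (fst b)) (q1 (snd b)) \<le> detour a b"
  unfolding detour_def by (simp add: add.assoc add_increasing)

lemma detour_trans:
  assumes "a \<in> X \<times> X" "b \<in> X \<times> X" "c \<in> X \<times> X"
    and "detour a b \<le> dS (q0 (fst a)) (q1 (snd a))" "detour b c \<le> dS (q0 (fst b)) (q1 (snd b))"
  shows "detour a c \<le> dS (q0 (fst a)) (q1 (snd a))"
proof -
  have "detour a c \<le> (dX (fst a) (fst b) + dX (fst b) (fst c)) + dS (q0 (fst c)) (q1 (snd c))
      + (dX (snd c) (snd b) + dX (snd b) (snd a))"
    unfolding detour_def using assms(1-3)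
    by (intro add_mono X.triangle order_refl) auto
  also have "\<dots> = dX (fst a) (fst b) + detour b c + dX (snd b) (snd a)"
    unfolding detour_def by (simp add: ac_simps)
  also have "\<dots> \<le> detour a b"
    using assms(5) unfolding detour_def by (intro add_mono) auto
  finally show ?thesis
    using assms(4) by simp
qed

lemma lsc_detour: "a \<in> X \<times> X \<Longrightarrow> lsc (prod_topology TX TX) (detour a)"
proof -
  assume a: "a \<in> X \<times> X"
  have c1: "continuous_map (prod_topology TX TX) (prod_topology TX TX) (\<lambda>b. (fst a, fst b))"
    and c2: "continuous_map (prod_topology TX TX) (prod_topology TX TX) (\<lambda>b. (snd b, snd a))"
    and c3: "continuous_map (prod_topology TX TX) (prod_topology TS TS) (\<lambda>b. (q0 (fst b), q1 (snd b)))"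
    using a continuous_map_compose[OF continuous_map_fst mor_continuous_map[OF mor_q0]]
      continuous_map_compose[OF continuous_map_snd mor_continuous_map[OF mor_q1]]
    by (auto simp: continuous_map_paired o_def continuous_map_fst continuous_map_snd)
  have "lsc (prod_topology TX TX) (\<lambda>b. dX (fst a) (fst b) + dS (q0 (fst b)) (q1 (snd b)) + dX (snd b) (snd a))"
    using lsc_add[OF lsc_add[OF lsc_compose[OF c1 X.lsc] lsc_compose[OF c3 S.lsc]] lsc_compose[OF c2 X.lsc]]
    by simp
  then show ?thesis
    by (simp add: detour_def[abs_def])
qed

lemma maximal_detour:
  assumes "x \<in> X" "y \<in> X"
  obtains m where "m \<in> X \<times> X" "detour (x, y) m \<le> dS (q0 x) (q1 y)"
    "\<And>b. \<lbrakk>b \<in> X \<times> X; detour m b \<le> dS (q0 (fst m)) (q1 (snd m))\<rbrakk>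
      \<Longrightarrow> detour b m \<le> dS (q0 (fst b)) (q1 (snd b))"
proof (rule compact_space_preorder_maximal[of "prod_topology TX TX" "(x, y)"
      "\<lambda>a b. detour a b \<le> dS (q0 (fst a)) (q1 (snd a))"])
  show "compact_space (prod_topology TX TX)"
    by (simp add: compact_space_prod_topology X.compact)
  show "closedin (prod_topology TX TX) {b \<in> topspace (prod_topology TX TX). detour a b \<le> dS (q0 (fst a)) (q1 (snd a))}"
    if "a \<in> topspace (prod_topology TX TX)" for a
    using lsc_closedin_sublevel[OF lsc_detour] that by simp
  show "detour a c \<le> dS (q0 (fst a)) (q1 (snd a))"
    if "a \<in> topspace (prod_topology TX TX)" "b \<in> topspace (prod_topology TX TX)"
      "c \<in> topspace (prod_topology TX TX)" "detour a b \<le> dS (q0 (fst a)) (q1 (snd a))"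
      "detour b c \<le> dS (q0 (fst b)) (q1 (snd b))" for a b c
    by (rule detour_trans) (use that in simp_all)
qed (use assms that in \<open>auto simp: detour_self\<close>)

end

locale weakly_transitive_corel = equiv_corel +
  assumes weakly_transitive: "\<And>x y. \<lbrakk>x \<in> topspace TX; y \<in> topspace TX\<rbrakk> \<Longrightarrow>
    \<exists>z\<in>topspace TX. dS (q0 x) (q1 z) + dS (q0 z) (q1 y) \<le> dS (q0 x) (q1 y)"
begin

text \<open>The point \<open>z\<close> given by weak transitivity yields the detours \<open>(p, z)\<close> and \<open>(z, q)\<close>, which
  are cheaper than \<open>(p, q)\<close>; by maximality they are also more expensive, which forces
  \<open>c p q + c p q \<le> c p q\<close>, so \<open>c p q = 0\<close> and everything collapses onto \<open>z\<close>.\<close>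

lemma maximal_detour_collapses:
  assumes pq: "p \<in> X" "q \<in> X" "dS (q0 p) (q1 q) < \<infinity>"
    and maximal: "\<And>b. \<lbrakk>b \<in> X \<times> X; detour (p, q) b \<le> dS (q0 p) (q1 q)\<rbrakk>
      \<Longrightarrow> detour b (p, q) \<le> dS (q0 (fst b)) (q1 (snd b))"
  obtains z where "z \<in> X" "q0 z = q1 z" "dS (q0 p) (q1 q) = 0" "dX p z = 0" "dX z q = 0"
proof -
  obtain z where z: "z \<in> X" "dS (q0 p) (q1 z) + dS (q0 z) (q1 q) \<le> dS (q0 p) (q1 q)"
    using weakly_transitive[OF pq(1,2)] by blast
  have "detour (p, q) (p, z) \<le> dS (q0 p) (q1 q)"
    using order_trans[OF add_left_mono[OF dX_le_cross[OF z(1) pq(2)]] z(2)] z pq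
    unfolding detour_def by simp
  then have back1: "dS (q0 p) (q1 q) + dX q z \<le> dS (q0 p) (q1 z)"
    using maximal[of "(p, z)"] z pq unfolding detour_def by simp
  have "detour (p, q) (z, q) \<le> dS (q0 p) (q1 q)"
    using order_trans[OF add_right_mono[OF dX_le_cross[OF pq(1) z(1)]] z(2)] z pq
    unfolding detour_def by simp
  then have back2: "dX z p + dS (q0 p) (q1 q) \<le> dS (q0 z) (q1 q)"
    using maximal[of "(z, q)"] z pq unfolding detour_def by simp
  have "dS (q0 p) (q1 q) + dS (q0 p) (q1 q) \<le> (dS (q0 p) (q1 q) + dX q z) + (dX z p + dS (q0 p) (q1 q))"
    by (intro add_mono) (simp_all add: add_increasing)
  also have "\<dots> \<le> dS (q0 p) (q1 z) + dS (q0 z) (q1 q)"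
    using back1 back2 by (rule add_mono)
  also have "\<dots> \<le> dS (q0 p) (q1 q) + 0"
    using z(2) by simp
  finally have cross_pq: "dS (q0 p) (q1 q) = 0"
    using pq(3) by (auto simp: ennreal_add_left_cancel_le)
  then have cross_pz: "dS (q0 p) (q1 z) = 0" and cross_zq: "dS (q0 z) (q1 q) = 0"
    using z(2) by simp_all
  then have "dX z p = 0"
    using back2 cross_pq by simp
  then have "dS (q0 z) (q1 z) = 0"
    using S.triangle[of "q0 z" "q0 p" "q1 z"] cross_pz z pq by (simp add: swap.q0_in)
  then have "q0 z = q1 z"
    using S.separated[of "q0 z" "q1 z"] cross_swap[of z z] z by (simp add: swap.q0_in)
  moreover have "dX p z = 0" "dX z q = 0"
    using dX_le_cross[of p z] dX_le_cross[of z q] cross_pz cross_zq z pq by simp_all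
  ultimately show thesis
    using that z(1) cross_pq by blast
qed

lemma equaliser_point_between:
  assumes "x \<in> X" "y \<in> X" "dS (q0 x) (q1 y) < \<infinity>"
  obtains a where "a \<in> X" "q0 a = q1 a" "dX x a + dX a y \<le> dS (q0 x) (q1 y)"
proof -
  obtain m where m: "m \<in> X \<times> X" "detour (x, y) m \<le> dS (q0 x) (q1 y)"
    "\<And>b. \<lbrakk>b \<in> X \<times> X; detour m b \<le> dS (q0 (fst m)) (q1 (snd m))\<rbrakk>
      \<Longrightarrow> detour b m \<le> dS (q0 (fst b)) (q1 (snd b))"
    using maximal_detour[OF assms(1,2)] by blast
  obtain p q where m_eq: "m = (p, q)"
    by fastforce
  have pq: "p \<in> X" "q \<in> X" and xy: "detour (x, y) (p, q) \<le> dS (q0 x) (q1 y)"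
    using m(1,2) m_eq by auto
  have "dS (q0 p) (q1 q) < \<infinity>"
    using cross_le_detour[of "(p, q)" "(x, y)"] xy assms(3) by simp
  then obtain z where z: "z \<in> X" "q0 z = q1 z" "dS (q0 p) (q1 q) = 0" "dX p z = 0" "dX z q = 0"
    using maximal_detour_collapses[OF pq _ m(3)[unfolded m_eq fst_conv snd_conv]] by blast
  have "dX x z + dX z y \<le> dX x p + dX q y"
    using X.triangle[of x p z] X.triangle[of z q y] assms z pq by (simp add: add_mono)
  also have "\<dots> \<le> dS (q0 x) (q1 y)"
    using xy z(3) unfolding detour_def by simp
  finally show thesis
    using that z(1,2) by blast
qed

lemma cross_factor_estimate:
  assumes "metch_space TQ dQ" "mor (TX, dX) (TQ, dQ) h0" "mor (TX, dX) (TQ, dQ) h1"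
    and agree: "\<And>a. \<lbrakk>a \<in> X; q0 a = q1 a\<rbrakk> \<Longrightarrow> h0 a = h1 a"
    and "x \<in> X" "y \<in> X"
  shows "dQ (h0 x) (h1 y) \<le> dS (q0 x) (q1 y)"
proof (cases "dS (q0 x) (q1 y) < \<infinity>")
  case True
  then obtain a where a: "a \<in> X" "q0 a = q1 a" "dX x a + dX a y \<le> dS (q0 x) (q1 y)"
    using equaliser_point_between assms(5,6) by blast
  have "dQ (h0 x) (h1 y) \<le> dQ (h0 x) (h0 a) + dQ (h0 a) (h1 y)"
    using metch_space.triangle[OF assms(1)] mor_in_topspace[OF assms(2)] mor_in_topspace[OF assms(3)]
      assms(5,6) a(1) by simp
  also have "\<dots> = dQ (h0 x) (h0 a) + dQ (h1 a) (h1 y)"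
    using agree a by simp
  also have "\<dots> \<le> dX x a + dX a y"
    using mor_nonexpansive[OF assms(2)] mor_nonexpansive[OF assms(3)] assms(5,6) a(1)
    by (intro add_mono) simp_all
  finally show ?thesis
    using a(3) by simp
qed (simp add: not_less top_unique)

lemma mor_copair:
  assumes Q: "metch_space TQ dQ" and h0: "mor (TX, dX) (TQ, dQ) h0" and h1: "mor (TX, dX) (TQ, dQ) h1"
    and agree: "\<And>a. \<lbrakk>a \<in> X; q0 a = q1 a\<rbrakk> \<Longrightarrow> h0 a = h1 a"
  shows "mor (TS, dS) (TQ, dQ) (copair h0 h1)"
proof -
  have "dQ (copair h0 h1 s) (copair h0 h1 s') \<le> dS s s'" if "s \<in> S" "s' \<in> S" for s s'
    using that
  proof (elim S_cases)
    fix x y assume "x \<in> X" "y \<in> X" "s = q1 x" "s' = q0 y"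
    then show ?thesis
      using cross_factor_estimate[OF Q h1 h0 agree[symmetric]] cross_swap agree by simp
  qed (simp_all add: agree mor_nonexpansive[OF h0] mor_nonexpansive[OF h1] cross_factor_estimate[OF Q h0 h1 agree])
  then show ?thesis
    using continuous_map_copair[OF mor_continuous_map[OF h0] mor_continuous_map[OF h1] agree]
    by (simp add: mor_iff)
qed

lemma effective: "pushout_wrt TYPE('q) (equaliser_obj (TX, dX) q0 q1) (TX, dX) (TX, dX) id id (TS, dS) q0 q1"
proof -
  define A where "A = {x \<in> X. q0 x = q1 x}"
  have closed_A: "closedin TX A"
    unfolding A_def using S.Hausdorff mor_continuous_map[OF mor_q0] mor_continuous_map[OF mor_q1]
    by (rule closedin_continuous_maps_eq)
  have carrier_A: "carrier_of (subtopology TX A, dX) = A"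
    using closedin_subset[OF closed_A] by (auto simp: carrier_of_def)
  have "pushout_wrt TYPE('q) (subtopology TX A, dX) (TX, dX) (TX, dX) id id (TS, dS) q0 q1"
  proof (rule pushout_wrtI)
    show "metch (subtopology TX A, dX)"
      using X.metch_space_subtopology[OF closed_A] by (simp add: metch_iff_metch_space)
    show "metch (TX, dX)" "metch (TX, dX)" "metch (TS, dS)"
      by (fact metch_X metch_X metch_S)+
    show "mor (subtopology TX A, dX) (TX, dX) id" "mor (subtopology TX A, dX) (TX, dX) id"
      by (simp_all add: mor_iff continuous_map_from_subtopology)
    show "mor (TX, dX) (TS, dS) q0" "mor (TX, dX) (TS, dS) q1"
      by (fact mor_q0 mor_q1)+
    show "q0 (id x) = q1 (id x)" if "x \<in> carrier_of (subtopology TX A, dX)" for x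
      using that carrier_A by (simp add: A_def)
    show "carrier_of (TS, dS) \<subseteq> q0 ` carrier_of (TX, dX) \<union> q1 ` carrier_of (TX, dX)"
      using cover by (simp add: carrier_of_def)
  next
    fix TQ :: "'q topology" and dQ h0 h1
    assume Q: "metch_space TQ dQ" "mor (TX, dX) (TQ, dQ) h0" "mor (TX, dX) (TQ, dQ) h1"
      and "\<And>x. x \<in> carrier_of (subtopology TX A, dX) \<Longrightarrow> h0 (id x) = h1 (id x)"
    then have agree: "\<And>a. \<lbrakk>a \<in> X; q0 a = q1 a\<rbrakk> \<Longrightarrow> h0 a = h1 a"
      using carrier_A by (simp add: A_def)
    show "\<exists>k. mor (TS, dS) (TQ, dQ) k \<and> (\<forall>x\<in>carrier_of (TX, dX). k (q0 x) = h0 x) \<and>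
        (\<forall>x\<in>carrier_of (TX, dX). k (q1 x) = h1 x)"
      using mor_copair[OF Q agree] agree by (intro exI[of _ "copair h0 h1"]) (simp add: carrier_of_def)
  qed
  then show ?thesis
    by (simp add: equaliser_obj_def carrier_of_def A_def)
qed

end

theorem theorem5p15:
  fixes X :: "'x metobj" and S :: "'s metobj" and q0 q1 :: "'x \<Rightarrow> 's"
  assumes "equivalence_corel X S q0 q1"
  shows "effective_wrt TYPE('q) X S q0 q1"
proof -
  obtain TX dX TS dS where XS: "X = (TX, dX)" "S = (TS, dS)"
    by fastforce
  obtain e sw where e: "mor S X e" "\<forall>x\<in>carrier_of X. e (q0 x) = x \<and> e (q1 x) = x"
    and sw: "mor S S sw" "\<forall>x\<in>carrier_of X. sw (q0 x) = q1 x \<and> sw (q1 x) = q0 x"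
    using assms unfolding equivalence_corel_def reflexive_corel_def symmetric_corel_def by blast
  interpret equiv_corel TX dX TS dS q0 q1 e sw
    using assms e sw unfolding equivalence_corel_def binary_corel_def XS
    by unfold_locales (auto simp: carrier_of_def)
  interpret weakly_transitive_corel TX dX TS dS q0 q1 e sw
    using assms cross_weakly_transitive unfolding equivalence_corel_def XS
    by unfold_locales metis
  show ?thesis
    using effective unfolding effective_wrt_def XS .
qed

end
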